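(* Let $D$ be a squarefree integer, not a perfect square, with $D\equiv 1\pmod 8$, and let $D=\pm\prod_{i=1}^r p_i$ with distinct primes $p_1<\cdots<p_r$. Define \[ c_{\mathrm{loc}}:=4\prod_{i=1}^r\sum_{l=1}^{\infty}\frac{|\mathcal{R}_l^*(p_i)|}{p_i^{2(8l+1)}}. \] Then $c_{\mathrm{loc}}\geq \dfrac{4}{D^2}$.
   Context: $Q_1(\mathbf{t})=t_2^2-Dt_3^2-t_0t_1$, $Q_2(\mathbf{t})=t_2^2-Dt_4^2-(t_0+At_1)(t_0+Bt_1)$, $G(A,B)=A^2-2AB+B^2-2A-2B+1$. For a prime $p$ and $l\geq 1$, $\mathcal{R}_l(p)$ is the set of pairs of residue classes $(A,B)$ modulo $p^{8l+1}$ such that $p^{l+1}$ divides none of $A,B,A-B,G(A,B)$ and $Q_1(\mathbf{t})\equiv Q_2(\mathbf{t})\equiv 0\pmod{p^{8l+1}}$ has a solution $\mathbf{t}\in(\mathbb{Z}/p^{8l+1}\mathbb{Z})^5$ with components not all divisible by $p$. Set $\mathcal{R}_0(p)=\emptyset$, and for $l\geq 1$ let $\mathcal{R}_l^*(p)\subset\mathcal{R}_l(p)$ be the set of $(A,B)\in\mathcal{R}_l(p)$ whose reduction modulo $p^{8(l-1)+1}$ is not in $\mathcal{R}_{l-1}(p)$. *)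

theory Defs
  imports "HOL-Analysis.Analysis" "HOL-Computational_Algebra.Squarefree"
begin

definition Q1 :: "int \<Rightarrow> int \<Rightarrow> int \<Rightarrow> int \<Rightarrow> int \<Rightarrow> int \<Rightarrow> int" where
  "Q1 D t0 t1 t2 t3 t4 = t2^2 - D * t3^2 - t0 * t1"

definition Q2 :: "int \<Rightarrow> int \<Rightarrow> int \<Rightarrow> int \<Rightarrow> int \<Rightarrow> int \<Rightarrow> int \<Rightarrow> int \<Rightarrow> int" where
  "Q2 D A B t0 t1 t2 t3 t4 = t2^2 - D * t4^2 - (t0 + A * t1) * (t0 + B * t1)"

definition G :: "int \<Rightarrow> int \<Rightarrow> int" where
  "G A B = A^2 - 2*A*B + B^2 - 2*A - 2*B + 1"

text \<open>R D p l: pairs of residue classes (A,B) mod p^(8l+1), represented by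
  representatives in {0..<p^(8l+1)}; empty for l = 0.\<close>
definition R :: "int \<Rightarrow> int \<Rightarrow> nat \<Rightarrow> (int \<times> int) set" where
  "R D p l = (if l = 0 then {} else
     (let N = p ^ (8*l+1) in
      {(A, B). A \<in> {0..<N} \<and> B \<in> {0..<N} \<and>
        \<not> p^(l+1) dvd A \<and> \<not> p^(l+1) dvd B \<and> \<not> p^(l+1) dvd (A - B) \<and>
        \<not> p^(l+1) dvd G A B \<and>
        (\<exists>t0\<in>{0..<N}. \<exists>t1\<in>{0..<N}. \<exists>t2\<in>{0..<N}. \<exists>t3\<in>{0..<N}. \<exists>t4\<in>{0..<N}.
           \<not> (p dvd t0 \<and> p dvd t1 \<and> p dvd t2 \<and> p dvd t3 \<and> p dvd t4) \<and>
           N dvd Q1 D t0 t1 t2 t3 t4 \<and> N dvd Q2 D A B t0 t1 t2 t3 t4)}))"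

definition Rstar :: "int \<Rightarrow> int \<Rightarrow> nat \<Rightarrow> (int \<times> int) set" where
  "Rstar D p l = {(A, B). (A, B) \<in> R D p l \<and>
      (A mod p ^ (8*(l-1)+1), B mod p ^ (8*(l-1)+1)) \<notin> R D p (l - 1)}"

definition c_loc :: "int \<Rightarrow> ennreal" where
  "c_loc D = 4 * (\<Prod>p\<in>{p::nat. prime p \<and> int p dvd D}.
      (\<Sum>l. ennreal (real (card (Rstar D (int p) (Suc l))) / real p ^ (2*(8*(Suc l)+1)))))"

end

theory Submission
  imports Defs "HOL-Number_Theory.Cong"
begin

text \<open>Every prime \<open>p\<close> dividing \<open>D\<close> is odd and divides \<open>D\<close> exactly, and already the
  level-one sets are large: every pair with \<open>A = p a\<close>, \<open>p \<nmid> a\<close>, \<open>B \<equiv> -1 (mod p)\<close> lies in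
  \<open>R\<^sub>1(p)\<close>, because a representation \<open>a \<equiv> (D/p)(x^2 + y^2) (mod p)\<close> with \<open>p \<nmid> y\<close> lifts by
  Hensel's lemma to a primitive solution. Together with the swapped pairs this gives
  \<open>|R\<^sub>1(p)| \<ge> 2 (p - 1) p^15 \<ge> p^16\<close>. As \<open>R\<^sub>1\<^sup>* = R\<^sub>1\<close>, each local factor is at least
  \<open>p^16 / p^18 = p^-2\<close>, and the product of the primes dividing \<open>D\<close> is at most \<open>|D|\<close>.\<close>

lemma square_root_lift_mod_prime_power:
  fixes p c M y :: int
  assumes p: "prime p" "odd p" and c: "\<not> p dvd c" and y: "\<not> p dvd y"
    and root: "[c * y^2 = M] (mod p)"
  shows "\<exists>t. [c * t^2 = M] (mod p^Suc k) \<and> [t = y] (mod p)"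
proof (induction k)
  case 0
  show ?case using root by auto
next
  case (Suc k)
  then obtain t where t: "[c * t^2 = M] (mod p^Suc k)" "[t = y] (mod p)" by blast
  obtain m where m: "M - c * t^2 = p^Suc k * m"
    using t(1) by (metis cong_iff_dvd_diff cong_sym dvdE)
  have "\<not> p dvd t" using t(2) y by (metis cong_dvd_iff)
  with p c have "coprime (2 * c * t) p"
    using prime_imp_coprime[of p c] prime_imp_coprime[of p t] by (simp add: coprime_commute)
  then obtain z where "[2 * c * t * z = 1] (mod p)" using cong_solve_coprime_int by blast
  then obtain w where w: "1 - 2 * c * t * z = p * w"
    by (metis cong_iff_dvd_diff cong_sym dvdE)
  \<comment> \<open>Newton step; it works because the derivative \<open>2 c t\<close> is a unit modulo \<open>p\<close>.\<close>
  define t' where "t' = t + p^Suc k * m * z"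
  have "M - c * t'^2 = p^Suc k * m * (1 - 2 * c * t * z) - c * (p^Suc k * m * z)^2"
    unfolding t'_def using m by (simp add: algebra_simps power2_eq_square)
  also have "\<dots> = p^Suc (Suc k) * (m * w - c * p^k * m^2 * z^2)"
    unfolding w by (simp add: algebra_simps power2_eq_square)
  finally have "[c * t'^2 = M] (mod p^Suc (Suc k))"
    by (metis cong_iff_dvd_diff cong_sym dvdI)
  moreover have "[t' = t] (mod p)"
    by (simp add: t'_def cong_iff_dvd_diff)
  then have "[t' = y] (mod p)" using t(2) by (rule cong_trans)
  ultimately show ?case by blast
qed

lemma scaled_squares_inj_mod_prime:
  fixes p d :: int
  assumes p: "prime p" and d: "\<not> p dvd d"
    and x1: "0 \<le> x1" "2 * x1 < p" and x2: "0 \<le> x2" "2 * x2 < p"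
    and cong: "[d * x1^2 = d * x2^2] (mod p)"
  shows "x1 = x2"
proof -
  have "p dvd d * ((x1 - x2) * (x1 + x2))"
    using cong by (simp add: cong_iff_dvd_diff algebra_simps power2_eq_square)
  with p d have "p dvd x1 - x2 \<or> p dvd x1 + x2" by (simp add: prime_dvd_mult_iff)
  moreover have "\<bar>x1 - x2\<bar> < p" "\<bar>x1 + x2\<bar> < p" using x1 x2 by auto
  ultimately show ?thesis
    using x1 x2 dvd_imp_le_int[of "x1 - x2" p] dvd_imp_le_int[of "x1 + x2" p] by force
qed

text \<open>Pigeonhole: the \<open>(p+1)/2\<close> values of \<open>d x^2\<close> and of \<open>a - d y^2\<close> with
  \<open>0 \<le> x, y \<le> (p-1)/2\<close> cannot be distinct modulo \<open>p\<close>.\<close>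
lemma scaled_sum_of_two_squares_mod_prime:
  fixes p a d :: int
  assumes p: "prime p" "odd p" and a: "\<not> p dvd a" and d: "\<not> p dvd d"
  shows "\<exists>x y. \<not> p dvd y \<and> [d * (x^2 + y^2) = a] (mod p)"
proof -
  define S where "S = {0..(p - 1) div 2}"
  define f where "f x = (d * x^2) mod p" for x
  define g where "g y = (a - d * y^2) mod p" for y
  have p2: "p \<ge> 2" using prime_ge_2_int[OF p(1)] .
  have half: "0 \<le> x \<and> 2 * x < p" if "x \<in> S" for x
    using that p(2) unfolding S_def by (auto elim!: oddE)
  have "\<exists>x\<in>S. \<exists>y\<in>S. f x = g y"
  proof (rule ccontr)
    assume "\<not> ?thesis"
    then have disj: "f ` S \<inter> g ` S = {}" by auto
    have "inj_on f S"
      by (rule inj_onI) (use half scaled_squares_inj_mod_prime[OF p(1) d] in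
          \<open>auto simp: f_def cong_def\<close>)
    moreover have "inj_on g S"
    proof (rule inj_onI)
      fix y1 y2 assume "y1 \<in> S" "y2 \<in> S" "g y1 = g y2"
      then have "[d * y2^2 = d * y1^2] (mod p)"
        by (simp add: g_def mod_eq_dvd_iff cong_iff_dvd_diff)
      with half[OF \<open>y1 \<in> S\<close>] half[OF \<open>y2 \<in> S\<close>] show "y1 = y2"
        using scaled_squares_inj_mod_prime[OF p(1) d] by force
    qed
    ultimately have "card (f ` S \<union> g ` S) = 2 * card S"
      using disj by (simp add: card_Un_disjoint card_image S_def)
    also have "\<dots> = nat (p + 1)" using p(2) by (auto simp: S_def elim!: oddE)
    finally have "card (f ` S \<union> g ` S) > card {0..<p}" using p2 by simp
    moreover have "f ` S \<union> g ` S \<subseteq> {0..<p}" using p2 by (auto simp: f_def g_def)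
    ultimately show False by (meson card_mono finite_atLeastLessThan_int leD)
  qed
  then obtain x y where xy: "x \<in> S" "y \<in> S" "f x = g y" by blast
  then have sum: "[d * (x^2 + y^2) = a] (mod p)"
    by (simp add: f_def g_def mod_eq_dvd_iff cong_iff_dvd_diff algebra_simps)
  show ?thesis
  proof (cases "p dvd y")
    case False
    with sum show ?thesis by blast
  next
    case True
    with half[OF xy(2)] have "y = 0" using dvd_imp_le_int[of y p] by force
    with sum have sum': "[d * (y^2 + x^2) = a] (mod p)" by simp
    have "\<not> p dvd x"
      using sum' a \<open>y = 0\<close> by (metis cong_dvd_iff dvd_mult dvd_mult2 dvd_power power2_eq_square add_0 zero_power2)
    with sum' show ?thesis by blast
  qed
qed

lemma Q1_cong:
  assumes "[t0 = s0] (mod N)" "[t1 = s1] (mod N)" "[t2 = s2] (mod N)" "[t3 = s3] (mod N)"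
  shows "[Q1 D t0 t1 t2 t3 t4 = Q1 D s0 s1 s2 s3 s4] (mod N)"
  unfolding Q1_def using assms by (intro cong_diff cong_mult cong_pow cong_refl)

lemma Q2_cong:
  assumes "[t0 = s0] (mod N)" "[t1 = s1] (mod N)" "[t2 = s2] (mod N)" "[t4 = s4] (mod N)"
  shows "[Q2 D A B t0 t1 t2 t3 t4 = Q2 D A B s0 s1 s2 s3 s4] (mod N)"
  unfolding Q2_def using assms by (intro cong_diff cong_mult cong_pow cong_add cong_refl)

lemma G_cong:
  assumes "[A = A'] (mod N)" "[B = B'] (mod N)"
  shows "[G A B = G A' B'] (mod N)"
  unfolding G_def using assms by (intro cong_diff cong_add cong_mult cong_pow cong_refl)

lemma mem_R_of_int_solution:
  fixes p D A B t0 t1 t2 t3 t4 :: int and l :: nat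
  assumes "l > 0" "p > 0"
    and "A \<in> {0..<p^(8*l+1)}" "B \<in> {0..<p^(8*l+1)}"
    and "\<not> p^(l+1) dvd A" "\<not> p^(l+1) dvd B" "\<not> p^(l+1) dvd (A - B)" "\<not> p^(l+1) dvd G A B"
    and primitive: "\<not> (p dvd t0 \<and> p dvd t1 \<and> p dvd t2 \<and> p dvd t3 \<and> p dvd t4)"
    and Q1: "p^(8*l+1) dvd Q1 D t0 t1 t2 t3 t4" and Q2: "p^(8*l+1) dvd Q2 D A B t0 t1 t2 t3 t4"
  shows "(A, B) \<in> R D p l"
proof -
  define N where "N = p^(8*l+1)"
  have mem: "t mod N \<in> {0..<N}" for t
    using \<open>p > 0\<close> by (simp add: N_def)
  have red: "[t mod N = t] (mod N)" for t
    by (simp add: cong_def)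
  have "p dvd N" by (simp add: N_def)
  then have "\<not> (p dvd t0 mod N \<and> p dvd t1 mod N \<and> p dvd t2 mod N \<and> p dvd t3 mod N \<and> p dvd t4 mod N)"
    using primitive by (simp add: dvd_mod_iff)
  moreover have "N dvd Q1 D (t0 mod N) (t1 mod N) (t2 mod N) (t3 mod N) (t4 mod N)"
    using Q1[folded N_def] cong_dvd_iff[OF Q1_cong[OF red red red red]] by blast
  moreover have "N dvd Q2 D A B (t0 mod N) (t1 mod N) (t2 mod N) (t3 mod N) (t4 mod N)"
    using Q2[folded N_def] cong_dvd_iff[OF Q2_cong[OF red red red red]] by blast
  ultimately have "\<exists>t0\<in>{0..<N}. \<exists>t1\<in>{0..<N}. \<exists>t2\<in>{0..<N}. \<exists>t3\<in>{0..<N}. \<exists>t4\<in>{0..<N}.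
      \<not> (p dvd t0 \<and> p dvd t1 \<and> p dvd t2 \<and> p dvd t3 \<and> p dvd t4) \<and>
      N dvd Q1 D t0 t1 t2 t3 t4 \<and> N dvd Q2 D A B t0 t1 t2 t3 t4"
    using mem by blast
  then show ?thesis
    using assms(1,3-8) unfolding R_def Let_def N_def[symmetric] by simp
qed

lemma odd_prime_not_dvd_4:
  fixes p :: int
  assumes "prime p" "odd p"
  shows "\<not> p dvd 4"
proof
  assume "p dvd 4"
  moreover have "coprime 4 p"
    using \<open>odd p\<close> coprime_power_left_iff[of 2 2 p] by simp
  ultimately show False
    using \<open>prime p\<close> by (simp add: not_prime_unit coprime_absorb_right)
qed

text \<open>The solution is \<open>t = (-D x^2, 1, 0, x, t4)\<close>, which makes \<open>Q1\<close> vanish; with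
  \<open>A = p a\<close>, \<open>D = p d\<close>, the condition \<open>p^9 | Q2\<close> becomes \<open>d t4^2 \<equiv> M (mod p^8)\<close> for
  \<open>M = -(a - d x^2)(B - D x^2) \<equiv> a - d x^2 \<equiv> d y^2 (mod p)\<close>.\<close>
lemma ramified_mem_R_1:
  fixes p D A B :: int
  assumes p: "prime p" "odd p" and D: "p dvd D" "\<not> p^2 dvd D"
    and A: "A \<in> {0..<p^9}" "p dvd A" "\<not> p^2 dvd A"
    and B: "B \<in> {0..<p^9}" "[B = -1] (mod p)"
  shows "(A, B) \<in> R D p 1"
proof -
  obtain a where a: "A = p * a" using A(2) by blast
  obtain d where d: "D = p * d" using D(1) by blast
  have "\<not> p dvd a" using A(3) by (auto simp: a power2_eq_square)
  moreover have "\<not> p dvd d" using D(2) by (auto simp: d power2_eq_square)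
  ultimately obtain x y where y: "\<not> p dvd y" and xy: "[d * (x^2 + y^2) = a] (mod p)"
    using scaled_sum_of_two_squares_mod_prime[OF p] by blast
  define M where "M = - (a - d * x^2) * (B - D * x^2)"
  have "[D * x^2 = 0] (mod p)" using D(1) by (simp add: cong_0_iff)
  then have "[B - D * x^2 = -1 - 0] (mod p)" using B(2) by (rule cong_diff[rotated])
  then have "[M = - (a - d * x^2) * -1] (mod p)" unfolding M_def by (intro cong_mult cong_refl) simp
  moreover have "[a - d * x^2 = d * y^2] (mod p)"
    using xy by (simp add: cong_iff_dvd_diff algebra_simps dvd_diff_commute)
  ultimately have "[M = d * y^2] (mod p)" by (auto intro: cong_trans)
  then have "[d * y^2 = M] (mod p)" by (rule cong_sym)
  from square_root_lift_mod_prime_power[OF p \<open>\<not> p dvd d\<close> y this, of 7]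
  obtain t where "[d * t^2 = M] (mod p^Suc 7)" by blast
  then have "p^Suc 8 dvd p * (d * t^2 - M)"
    unfolding power_Suc[of p 8] by (intro mult_dvd_mono dvd_refl) (simp add: cong_iff_dvd_diff)
  moreover have "Q2 D A B (- D * x^2) 1 0 x t = - (p * (d * t^2 - M))"
    unfolding Q2_def M_def a d by (simp add: algebra_simps power2_eq_square)
  ultimately have Q2: "p^(8*1+1) dvd Q2 D A B (- D * x^2) 1 0 x t"
    by simp
  have Q1: "Q1 D (- D * x^2) 1 0 x t = 0"
    unfolding Q1_def by simp
  have "[A = 0] (mod p)"
    using A(2) by (simp add: cong_0_iff)
  then have "[A - B = 0 - -1] (mod p)" "[G A B = G 0 (-1)] (mod p)"
    using B(2) by (rule cong_diff, rule G_cong)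
  then have "\<not> p dvd z" if "z \<in> {B, A - B, G A B}" for z
    using that B(2) odd_prime_not_dvd_4[OF p] p(1)
    by (auto simp: cong_dvd_iff G_def not_prime_unit)
  then have "\<not> p^(1+1) dvd z" if "z \<in> {B, A - B, G A B}" for z
    using that dvd_trans[of p "p^(1+1)" z] by auto
  then show ?thesis
    using A B Q1 Q2 prime_gt_0_int[OF p(1)]
    by (intro mem_R_of_int_solution[of 1 p A B "- D * x^2" 1 0 x t D])
      (auto simp: power2_eq_square)
qed

lemma swap_mem_R:
  assumes "(A, B) \<in> R D p l"
  shows "(B, A) \<in> R D p l"
proof -
  have "Q2 D B A = Q2 D A B" by (intro ext) (simp add: Q2_def mult.commute)
  moreover have "G B A = G A B" by (simp add: G_def algebra_simps)
  moreover have "m dvd B - A \<longleftrightarrow> m dvd A - B" for m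
    by (metis dvd_minus_iff minus_diff_eq)
  ultimately show ?thesis
    using assms unfolding R_def by (auto simp: Let_def split: if_splits)
qed

lemma mult_add_digit_less:
  fixes p q r m :: int
  assumes "q < m" "r < p" "0 \<le> p"
  shows "p * q + r < p * m"
proof -
  have "p * (q + 1) \<le> p * m" using assms by (intro mult_left_mono) auto
  then show ?thesis using assms(2) by (simp add: algebra_simps)
qed

lemma mult_add_digit_inj:
  fixes p q r q' r' :: int
  assumes "p * q + r = p * q' + r'" "0 \<le> r" "r < p" "0 \<le> r'" "r' < p"
  shows "q = q' \<and> r = r'"
proof -
  have "(p * q + r) mod p = r" "(p * q' + r') mod p = r'" using assms(2-5) by simp_all
  then have "r = r'" using assms(1) by simp
  with assms(1-3) show ?thesis by simp
qed

text \<open>The pairs \<open>(p m, B)\<close> with \<open>p \<nmid> m\<close>, \<open>B \<equiv> -1 (mod p)\<close> and their swaps already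
  give \<open>2 (p - 1) p^15 \<ge> p^16\<close> elements.\<close>
lemma card_R_1_ge:
  fixes p D :: int
  assumes p: "prime p" "odd p" and D: "p dvd D" "\<not> p^2 dvd D"
  shows "p^16 \<le> int (card (R D p 1))"
proof -
  have p2: "p \<ge> 2" using prime_ge_2_int[OF p(1)] .
  define I where "I = {0..<p^7} \<times> {1..<p} \<times> {0..<p^8}"
  define F where "F = (\<lambda>(j, r, k). (p * (p * j + r), p * k + (p - 1)))"
  have F_mem: "F x \<in> R D p 1" if xI: "x \<in> I" for x
  proof -
    obtain j r k where x: "x = (j, r, k)" and j: "0 \<le> j" "j < p^7"
      and r: "1 \<le> r" "r < p" and k: "0 \<le> k" "k < p^8"
      using xI unfolding I_def by (cases x) auto
    have "p * j + r < p^8" using mult_add_digit_less[OF j(2) r(2)] p2 power_Suc[of p 7] by simp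
    then have "p * (p * j + r) < p^9" using p2 power_Suc[of p 8] by simp
    moreover have "\<not> p^2 dvd p * (p * j + r)"
      using r p2 by (simp add: power2_eq_square dvd_add_right_iff zdvd_not_zless)
    moreover have "p * k + (p - 1) < p^9"
      using mult_add_digit_less[OF k(2), of "p - 1" p] p2 power_Suc[of p 8] by simp
    moreover have "[p * k + (p - 1) = -1] (mod p)" by (simp add: cong_iff_dvd_diff)
    ultimately have "(p * (p * j + r), p * k + (p - 1)) \<in> R D p 1"
      using j r k p2 by (intro ramified_mem_R_1[OF p D]) auto
    then show ?thesis by (simp add: x F_def)
  qed
  have "inj_on F I"
  proof (rule inj_onI)
    fix x y assume "x \<in> I" "y \<in> I" "F x = F y"
    moreover obtain j r k j' r' k' where "x = (j, r, k)" "y = (j', r', k')"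
      by (cases x, cases y) blast
    ultimately have "p * j + r = p * j' + r'" "k = k'" "0 \<le> r" "r < p" "0 \<le> r'" "r' < p"
      using p2 by (auto simp: F_def I_def)
    then show "x = y"
      using mult_add_digit_inj \<open>x = (j, r, k)\<close> \<open>y = (j', r', k')\<close> by blast
  qed
  define S where "S = F ` I"
  have "prod.swap ` S \<inter> S = {}"
  proof -
    have "\<not> p dvd p * k + (p - 1)" for k
    proof
      assume "p dvd p * k + (p - 1)"
      with dvd_triv_left have "p dvd p * (k + 1) - (p * k + (p - 1))" by (rule dvd_diff)
      then have "p dvd 1" by (simp add: algebra_simps)
      with p2 show False by (simp add: zdvd_not_zless)
    qed
    then have "p dvd fst z" "\<not> p dvd snd z" if "z \<in> S" for z
      using that by (auto simp: S_def F_def split: prod.splits)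
    then show ?thesis by force
  qed
  moreover have "finite S" by (simp add: S_def I_def)
  ultimately have "card (S \<union> prod.swap ` S) = 2 * card I"
    using \<open>inj_on F I\<close> by (simp add: card_Un_disjoint card_image S_def Int_commute)
  moreover have "int (card I) = p^7 * ((p - 1) * p^8)"
    using p2 by (simp add: I_def card_cartesian_product)
  moreover have "card (S \<union> prod.swap ` S) \<le> card (R D p 1)"
  proof (rule card_mono)
    have "R D p 1 \<subseteq> {0..<p^9} \<times> {0..<p^9}" by (auto simp: R_def Let_def)
    then show "finite (R D p 1)" by (rule finite_subset) auto
    have "S \<subseteq> R D p 1" using F_mem by (auto simp: S_def)
    then show "S \<union> prod.swap ` S \<subseteq> R D p 1"
      using swap_mem_R by auto
  qed
  moreover have "p^16 \<le> 2 * (p^7 * (p - 1) * p^8)"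
  proof -
    have "p^16 = p^15 * p" by (simp flip: power_Suc2)
    also have "\<dots> \<le> p^15 * (2 * (p - 1))" using p2 by (intro mult_left_mono) auto
    finally show ?thesis by (simp add: algebra_simps flip: power_add)
  qed
  ultimately show ?thesis by linarith
qed

lemma R_0: "R D p 0 = {}"
  by (simp add: R_def)

lemma Rstar_1: "Rstar D p 1 = R D p 1"
  by (simp add: Rstar_def R_0)

lemma prod_prime_divisors_le:
  fixes D :: int
  assumes "D \<noteq> 0"
  shows "(\<Prod>p\<in>{p. prime p \<and> int p dvd D}. p) \<le> nat \<bar>D\<bar>"
proof -
  have n0: "nat \<bar>D\<bar> \<noteq> 0" using assms by simp
  have P: "{p. prime p \<and> int p dvd D} = prime_factors (nat \<bar>D\<bar>)"
    using n0 by (auto simp: prime_factors_dvd)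
  have "(\<Prod>p\<in>prime_factors (nat \<bar>D\<bar>). p) dvd (\<Prod>p\<in>prime_factors (nat \<bar>D\<bar>). p ^ multiplicity p (nat \<bar>D\<bar>))"
    by (rule prod_dvd_prod) (simp add: prime_factors_multiplicity dvd_power)
  also have "\<dots> = nat \<bar>D\<bar>" using prod_prime_factors[OF n0] by simp
  finally show ?thesis unfolding P using n0 by (auto intro: dvd_imp_le)
qed

lemma inverse_square_le_prod_prime_divisors:
  fixes D :: int
  assumes "D \<noteq> 0"
  shows "1 / real_of_int (D^2) \<le> (\<Prod>p\<in>{p. prime p \<and> int p dvd D}. 1 / real p ^ 2)"
proof -
  define P where "P = {p::nat. prime p \<and> int p dvd D}"
  have "real (\<Prod>p\<in>P. p) \<le> \<bar>real_of_int D\<bar>"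
    using prod_prime_divisors_le[OF assms] unfolding P_def by linarith
  then have "real (\<Prod>p\<in>P. p) ^ 2 \<le> real_of_int (D^2)"
    by (metis abs_ge_zero of_int_power of_nat_0_le_iff power2_abs power_mono)
  moreover have "0 < (\<Prod>p\<in>P. p)" by (auto simp: P_def prime_gt_0_nat intro: prod_pos)
  ultimately show ?thesis
    unfolding P_def[symmetric]
    by (simp add: prod_dividef power_divide frac_le flip: prod_power_distrib of_nat_prod)
qed

lemma ennreal_term_le_suminf:
  fixes f :: "nat \<Rightarrow> ennreal"
  shows "f i \<le> suminf f"
  using sum_le_suminf[OF summableI, of "{i}" f] by simp

lemma Rstar_series_ge:
  fixes p :: nat and D :: int
  assumes p: "prime p" "odd p" and D: "int p dvd D" "\<not> (int p)^2 dvd D"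
  shows "ennreal (1 / real p ^ 2)
    \<le> (\<Sum>l. ennreal (real (card (Rstar D (int p) (Suc l))) / real p ^ (2 * (8 * Suc l + 1))))"
proof -
  have "int p ^ 16 \<le> int (card (R D (int p) 1))"
    using card_R_1_ge[of "int p" D] p D by simp
  then have "real p ^ 16 \<le> real (card (R D (int p) 1))"
    by (metis of_int_le_iff of_int_of_nat_eq of_nat_power)
  then have "real p ^ 16 / real p ^ 18 \<le> real (card (R D (int p) 1)) / real p ^ 18"
    by (rule divide_right_mono) simp
  moreover have "1 / real p ^ 2 = real p ^ 16 / real p ^ 18"
    using prime_gt_0_nat[OF p(1)] by (simp add: divide_simps flip: power_add)
  ultimately show ?thesis
    by (intro order_trans[OF ennreal_leI ennreal_term_le_suminf[of _ 0]])
      (simp add: Rstar_1[unfolded One_nat_def])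
qed

theorem lemma2p5:
  fixes D :: int
  assumes "squarefree D"
    and "\<not> (\<exists>k::int. D = k^2)"
    and "D mod 8 = 1"
  shows "c_loc D \<ge> ennreal (4 / real_of_int (D^2))"
proof -
  define P where "P = {p::nat. prime p \<and> int p dvd D}"
  define S where "S p = (\<Sum>l. ennreal (real (card (Rstar D (int p) (Suc l))) / real p ^ (2 * (8 * Suc l + 1))))"
    for p :: nat
  have "D \<noteq> 0" "odd D" using assms(3) by presburger+
  have "ennreal (1 / real p ^ 2) \<le> S p" if "p \<in> P" for p
    unfolding S_def
  proof (rule Rstar_series_ge)
    show "prime p" "int p dvd D" using that by (auto simp: P_def)
    then show "odd p" using \<open>odd D\<close> by (metis dvd_trans even_of_nat_iff)
    show "\<not> (int p)^2 dvd D"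
      using assms(1) \<open>prime p\<close> by (auto simp: squarefree_def power2_eq_square)
  qed
  then have prod_ge: "(\<Prod>p\<in>P. ennreal (1 / real p ^ 2)) \<le> (\<Prod>p\<in>P. S p)"
    by (rule prod_mono_ennreal)
  have "ennreal (4 / real_of_int (D^2)) = 4 * ennreal (1 / real_of_int (D^2))"
    using ennreal_mult[of 4 "1 / real_of_int (D^2)"] by simp
  also have "\<dots> \<le> 4 * ennreal (\<Prod>p\<in>P. 1 / real p ^ 2)"
    using inverse_square_le_prod_prime_divisors[OF \<open>D \<noteq> 0\<close>]
    by (intro mult_left_mono ennreal_leI) (auto simp: P_def)
  also have "\<dots> \<le> 4 * (\<Prod>p\<in>P. S p)"
    using prod_ge by (intro mult_left_mono) (simp_all add: prod_ennreal)
  also have "\<dots> = c_loc D"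
    by (simp add: c_loc_def P_def S_def)
  finally show ?thesis .
qed

end
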